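(* Consider the constrained perfect SIR model described in the context and assume $\gamma/\beta_{\min}+I_{\max}\le 1$. The barrier $[\partial\mathcal{A}]_-$ is constituted by the barrier curve $x^{\bar\beta}=(S,I)$ generated by the input rule $\bar\beta(t)=\beta_{\max}$ if $\lambda_2(t)-\lambda_1(t)<0$, $\bar\beta(t)=\beta_{\min}$ if $\lambda_2(t)-\lambda_1(t)>0$ (arbitrary in $[\beta_{\min},\beta_{\max}]$ if $\lambda_2(t)-\lambda_1(t)=0$), together with the adjoint equation $\dot\lambda=\begin{pmatrix}\bar\beta I & -\bar\beta I\\ \bar\beta S & -\bar\beta S+\gamma\end{pmatrix}\lambda$, $\lambda(\bar t)=(0,1)^T$, which ends tangentially to $G_0\cap\Pi$ at the point $(\gamma/\beta_{\min},I_{\max})\in G_0\cap\Pi$ at time $\bar t$; moreover there exists $\epsilon>0$ such that $x^{\bar\beta}(t)\in G_-$ for all $t\in]\bar t-\epsilon,\bar t[$.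
   Context: Perfect SIR model: fix $\gamma>0$, $0<\beta_{\min}\le\beta_{\max}$, $I_{\max}\in(0,1]$. State $x=(S,I)\in\mathbb{R}^2$, input a Lebesgue measurable $\beta:[t_0,\infty[\to[\beta_{\min},\beta_{\max}]$, dynamics $\dot S=-\beta SI$, $\dot I=\beta SI-\gamma I$, written $\dot x=f(x,\beta)$. Constraint function $g(S,I)=I-I_{\max}$; $G=\{I\le I_{\max}\}$, $G_-=\{I<I_{\max}\}$, $G_0=\{I=I_{\max}\}$, $\Pi=\{(S,I)\in[0,1]^2:S+I\le1\}$ (positively invariant), $G_\Pi=G\cap\Pi$. The admissible set is $\mathcal{A}=\{x_0\in G:\exists$ such an input $\beta$ with the solution from $x_0$ at $t_0$ in $G$ for all $t\ge t_0\}$ (a closed set); its barrier is $[\partial\mathcal{A}]_-=\partial\mathcal{A}\cap G_-$. A barrier curve of $\mathcal{A}$ is an integral curve $x^{\bar\beta}$ reaching $G_0$ tangentially at a finite time $\bar t$ at a point $z=x^{\bar\beta}(\bar t)$, together with a nonzero absolutely continuous solution $\lambda$ of $\dot\lambda=-(\partial f/\partial x)^T\lambda$ with $\lambda(\bar t)=Dg(z)^T=(0,1)^T$, such that $\min_{\beta\in[\beta_{\min},\beta_{\max}]}\lambda(t)^Tf(x^{\bar\beta}(t),\beta)=\lambda(t)^Tf(x^{\bar\beta}(t),\bar\beta(t))=0$ for a.e. $t$ and $\min_{\beta}L_fg(z,\beta)=L_fg(z,\bar\beta(\bar t))=0$, where $L_fg(x,\beta)=Dg(x)f(x,\beta)$.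 *)

theory Defs
  imports "HOL-Analysis.Analysis"
begin

text \<open>Perfect SIR model. States are pairs (S, I) :: real \<times> real.\<close>

definition sir_f :: "real \<Rightarrow> real \<times> real \<Rightarrow> real \<Rightarrow> real \<times> real" where
  "sir_f \<gamma> x b = (- b * fst x * snd x, b * fst x * snd x - \<gamma> * snd x)"

definition g_con :: "real \<Rightarrow> real \<times> real \<Rightarrow> real" where
  "g_con Imax x = snd x - Imax"

definition G_set :: "real \<Rightarrow> (real \<times> real) set" where
  "G_set Imax = {x. snd x \<le> Imax}"

definition G_minus :: "real \<Rightarrow> (real \<times> real) set" where
  "G_minus Imax = {x. snd x < Imax}"

definition G_zero :: "real \<Rightarrow> (real \<times> real) set" where
  "G_zero Imax = {x. snd x = Imax}"

definition Pi_set :: "(real \<times> real) set" where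
  "Pi_set = {x. 0 \<le> fst x \<and> fst x \<le> 1 \<and> 0 \<le> snd x \<and> snd x \<le> 1 \<and> fst x + snd x \<le> 1}"

text \<open>Lie derivative L_f g(x, b) = Dg(x) f(x, b), with Dg = (0, 1).\<close>
definition Lfg :: "real \<Rightarrow> real \<times> real \<Rightarrow> real \<Rightarrow> real" where
  "Lfg \<gamma> x b = snd (sir_f \<gamma> x b)"

definition admissible_input :: "real \<Rightarrow> real \<Rightarrow> real \<Rightarrow> (real \<Rightarrow> real) \<Rightarrow> bool" where
  "admissible_input bmin bmax t0 \<beta> \<longleftrightarrow>
     \<beta> \<in> borel_measurable lebesgue \<and> (\<forall>t\<ge>t0. bmin \<le> \<beta> t \<and> \<beta> t \<le> bmax)"

text \<open>(Caratheodory) solution from x0 at t0 under input \<beta>, existing on [t0, \<infinity>[.\<close>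
definition is_solution :: "real \<Rightarrow> (real \<Rightarrow> real) \<Rightarrow> real \<Rightarrow> real \<times> real \<Rightarrow> (real \<Rightarrow> real \<times> real) \<Rightarrow> bool" where
  "is_solution \<gamma> \<beta> t0 x0 x \<longleftrightarrow>
     x t0 = x0 \<and>
     (\<forall>t\<ge>t0. ((\<lambda>s. sir_f \<gamma> (x s) (\<beta> s)) has_integral (x t - x0)) {t0..t})"

definition admissible_set :: "real \<Rightarrow> real \<Rightarrow> real \<Rightarrow> real \<Rightarrow> real \<Rightarrow> (real \<times> real) set" where
  "admissible_set \<gamma> bmin bmax Imax t0 =
     {x0 \<in> G_set Imax. \<exists>\<beta> x. admissible_input bmin bmax t0 \<beta> \<and> is_solution \<gamma> \<beta> t0 x0 x \<and>
                              (\<forall>t\<ge>t0. x t \<in> G_set Imax)}"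

definition barrier :: "real \<Rightarrow> real \<Rightarrow> real \<Rightarrow> real \<Rightarrow> real \<Rightarrow> (real \<times> real) set" where
  "barrier \<gamma> bmin bmax Imax t0 = frontier (admissible_set \<gamma> bmin bmax Imax t0) \<inter> G_minus Imax"

end

theory Submission
  imports Defs
begin

text \<open>Under the constant input \<open>bmin\<close> the function \<open>V (S, I) = S + I - S_star ln S\<close>, where
  \<open>S_star = \<gamma> / bmin\<close>, is a first integral, and under any admissible input it does not decrease as
  long as \<open>S \<ge> S_star\<close>. Hence a state with \<open>0 < I \<le> Imax\<close> is admissible iff \<open>S \<le> S_star\<close> or
  \<open>V \<le> V (S_star, Imax)\<close>: in the first case \<open>I\<close> decreases under \<open>bmin\<close>, in the second the
  \<open>bmin\<close>-orbit attains its maximal \<open>I\<close> at \<open>S = S_star\<close>, where \<open>I \<le> Imax\<close>; otherwise every trajectory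
  reaches \<open>S = S_star\<close> with \<open>V > V (S_star, Imax)\<close>, that is, with \<open>I > Imax\<close>. So for \<open>0 < I < Imax\<close> the
  barrier is the level set \<open>S > S_star, V = V (S_star, Imax)\<close>, which is the \<open>bmin\<close>-orbit ending
  tangentially at \<open>(S_star, Imax)\<close>. Along it the costate \<open>(1 - S_star / S, 1)\<close> solves the adjoint
  equation, and the switching function \<open>\<lambda>\<^sub>2 - \<lambda>\<^sub>1 = S_star / S\<close> is positive.

  Constant-input trajectories are parametrized by their cumulative incidence \<open>w = \<integral> I\<close>, which solves
  a scalar equation \<open>w' = G w\<close>; its solution is the inverse of the time map
  \<open>v \<mapsto> \<integral>\<^sub>0\<^sup>v 1 / G\<close>.\<close>

section \<open>Integrals of increments and a chain rule\<close>

lemma has_integral_increment: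
  fixes f :: "real \<Rightarrow> 'a::banach"
  assumes base: "\<And>t. t0 \<le> t \<Longrightarrow> (f has_integral (x t - x t0)) {t0..t}"
    and "t0 \<le> s" "s \<le> t"
  shows "(f has_integral (x t - x s)) {s..t}"
proof -
  have t0t: "t0 \<le> t" using assms(2,3) by linarith
  have "f integrable_on {s..t}"
    using integrable_subinterval_real[OF has_integral_integrable[OF base[OF t0t]]] assms(2) by simp
  then obtain i where i: "(f has_integral i) {s..t}" by blast
  have "x s - x t0 + i = x t - x t0"
    using has_integral_combine[OF assms(2,3) base[OF assms(2)] i] base[OF t0t]
    by (rule has_integral_unique)
  then have "i = x t - x s" by (simp add: algebra_simps eq_diff_eq)
  then show ?thesis using i by simp
qed

lemma has_integral_increments_continuous_on:
  fixes u :: "real \<Rightarrow> 'a::banach"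
  assumes "\<And>t. t \<in> {a..b} \<Longrightarrow> (h has_integral (u t - u a)) {a..t}"
  shows "continuous_on {a..b} u"
proof (cases "a \<le> b")
  case True
  have "continuous_on {a..b} (\<lambda>t. u a + integral {a..t} h)"
    using assms[of b] True by (intro continuous_intros indefinite_integral_continuous_1) auto
  then show ?thesis
  proof (rule continuous_on_eq)
    fix t assume "t \<in> {a..b}"
    then show "u a + integral {a..t} h = u t" using assms[of t] by (simp add: integral_unique)
  qed
qed simp

lemma has_integral_abs_le:
  fixes f :: "real \<Rightarrow> real"
  assumes "(f has_integral i) {a..b}" "a \<le> b" "\<And>t. t \<in> {a..b} \<Longrightarrow> \<bar>f t\<bar> \<le> B"
  shows "\<bar>i\<bar> \<le> B * (b - a)"
proof -
  have "0 \<le> B" using assms(2) assms(3)[of a] by auto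
  then show ?thesis
    using has_integral_bound_real[OF \<open>0 \<le> B\<close> finite.emptyI assms(1)] assms(2,3)
    by (simp add: content_real)
qed

lemma mvt_closed_segment:
  fixes \<phi> \<phi>' :: "real \<Rightarrow> real"
  assumes "\<And>v. v \<in> closed_segment p q \<Longrightarrow> (\<phi> has_real_derivative \<phi>' v) (at v)"
  obtains \<xi> where "\<xi> \<in> closed_segment p q" "\<phi> q - \<phi> p = \<phi>' \<xi> * (q - p)"
proof (cases p q rule: linorder_cases)
  case less
  then obtain \<xi> where "p < \<xi>" "\<xi> < q" "\<phi> q - \<phi> p = (q - p) * \<phi>' \<xi>"
    using MVT2[OF less, of \<phi> \<phi>'] assms by (auto simp: closed_segment_eq_real_ivl)
  then show thesis using that[of \<xi>] less by (auto simp: closed_segment_eq_real_ivl)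
next
  case equal
  then show thesis using that[of p] by simp
next
  case greater
  then obtain \<xi> where "q < \<xi>" "\<xi> < p" "\<phi> p - \<phi> q = (p - q) * \<phi>' \<xi>"
    using MVT2[OF greater, of \<phi> \<phi>'] assms by (auto simp: closed_segment_eq_real_ivl)
  then show thesis using that[of \<xi>] greater by (auto simp: closed_segment_eq_real_ivl algebra_simps)
qed

lemma small_increments_imp_eq:
  fixes F :: "real \<Rightarrow> real"
  assumes "a \<le> b"
    and small: "\<And>e. 0 < e \<Longrightarrow> \<exists>d>0. \<forall>x y. a \<le> x \<longrightarrow> x \<le> y \<longrightarrow> y \<le> b \<longrightarrow> y - x < d \<longrightarrow>
                   \<bar>F y - F x\<bar> \<le> e * (y - x)"
  shows "F b = F a"
proof -
  have "(F has_real_derivative 0) (at s within {a..b})" if "s \<in> {a..b}" for s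
    unfolding has_field_derivative_iff Lim_within
  proof (intro allI impI)
    fix e :: real assume "0 < e"
    then obtain d where "0 < d" and d: "\<And>x y. a \<le> x \<Longrightarrow> x \<le> y \<Longrightarrow> y \<le> b \<Longrightarrow> y - x < d \<Longrightarrow>
        \<bar>F y - F x\<bar> \<le> e / 2 * (y - x)"
      using small[of "e / 2"] by auto
    have "dist ((F t - F s) / (t - s)) 0 < e" if "t \<in> {a..b}" "0 < dist t s" "dist t s < d" for t
    proof -
      have "\<bar>F t - F s\<bar> \<le> e / 2 * \<bar>t - s\<bar>"
        using d[of s t] d[of t s] that \<open>s \<in> {a..b}\<close>
        by (cases "s \<le> t") (auto simp: dist_real_def abs_minus_commute)
      moreover have "0 < \<bar>t - s\<bar>" using that by (simp add: dist_real_def)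
      moreover have "e / 2 * \<bar>t - s\<bar> < e * \<bar>t - s\<bar>"
        using \<open>0 < e\<close> calculation(2) by (intro mult_strict_right_mono) auto
      ultimately have "\<bar>F t - F s\<bar> < e * \<bar>t - s\<bar>" by linarith
      then show ?thesis
        using \<open>0 < \<bar>t - s\<bar>\<close> by (simp add: dist_real_def abs_divide pos_divide_less_eq)
    qed
    then show "\<exists>d>0. \<forall>t\<in>{a..b}. 0 < dist t s \<and> dist t s < d \<longrightarrow> dist ((F t - F s) / (t - s)) 0 < e"
      using \<open>0 < d\<close> by blast
  qed
  then obtain c where "\<forall>x\<in>{a..b}. F x = c"
    using has_field_derivative_zero_constant[of "{a..b}" F] by auto
  then show ?thesis using \<open>a \<le> b\<close> by auto
qed

lemma has_integral_if_small_defects: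
  fixes F g :: "real \<Rightarrow> real"
  assumes "a \<le> b" and g: "g integrable_on {a..b}"
    and small: "\<And>e. 0 < e \<Longrightarrow> \<exists>d>0. \<forall>x y. a \<le> x \<longrightarrow> x \<le> y \<longrightarrow> y \<le> b \<longrightarrow> y - x < d \<longrightarrow>
                   \<bar>F y - F x - integral {x..y} g\<bar> \<le> e * (y - x)"
  shows "(g has_integral (F b - F a)) {a..b}"
proof -
  have "(\<lambda>t. F t - integral {a..t} g) b = (\<lambda>t. F t - integral {a..t} g) a"
  proof (rule small_increments_imp_eq[OF \<open>a \<le> b\<close>])
    fix e :: real assume "0 < e"
    then obtain d where "0 < d"
      and d: "\<And>x y. a \<le> x \<Longrightarrow> x \<le> y \<Longrightarrow> y \<le> b \<Longrightarrow> y - x < d \<Longrightarrow> \<bar>F y - F x - integral {x..y} g\<bar> \<le> e * (y - x)"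
      using small by blast
    have "\<bar>(F y - integral {a..y} g) - (F x - integral {a..x} g)\<bar> \<le> e * (y - x)"
      if "a \<le> x" "x \<le> y" "y \<le> b" "y - x < d" for x y
    proof -
      have "integral {a..x} g + integral {x..y} g = integral {a..y} g"
        using that by (intro Henstock_Kurzweil_Integration.integral_combine
            integrable_subinterval_real[OF g]) auto
      then show ?thesis using d[OF that] by (simp add: algebra_simps)
    qed
    then show "\<exists>d>0. \<forall>x y. a \<le> x \<longrightarrow> x \<le> y \<longrightarrow> y \<le> b \<longrightarrow> y - x < d \<longrightarrow>
        \<bar>(F y - integral {a..y} g) - (F x - integral {a..x} g)\<bar> \<le> e * (y - x)"
      using \<open>0 < d\<close> by blast
  qed
  then show ?thesis using g by (simp add: has_integral_integrable_integral)
qed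

lemma chain_rule_defect_le:
  fixes u h \<phi> \<phi>' :: "real \<Rightarrow> real"
  assumes "x \<le> y"
    and u_int: "\<And>s t. x \<le> s \<Longrightarrow> s \<le> t \<Longrightarrow> t \<le> y \<Longrightarrow> (h has_integral (u t - u s)) {s..t}"
    and g_int: "((\<lambda>\<tau>. \<phi>' (u \<tau>) * h \<tau>) has_integral i) {x..y}"
    and h_bound: "\<And>\<tau>. \<tau> \<in> {x..y} \<Longrightarrow> \<bar>h \<tau>\<bar> \<le> M"
    and "is_interval K" "u ` {x..y} \<subseteq> K"
    and \<phi>_deriv: "\<And>v. v \<in> K \<Longrightarrow> (\<phi> has_real_derivative \<phi>' v) (at v)"
    and close: "\<And>p q. p \<in> K \<Longrightarrow> q \<in> K \<Longrightarrow> \<bar>q - p\<bar> \<le> 2 * M * (y - x) \<Longrightarrow> \<bar>\<phi>' q - \<phi>' p\<bar> \<le> e"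
  shows "\<bar>\<phi> (u y) - \<phi> (u x) - i\<bar> \<le> e * M * (y - x)"
proof -
  have "0 \<le> M" using h_bound[of x] \<open>x \<le> y\<close> by auto
  have u_lip: "\<bar>u t - u x\<bar> \<le> M * (y - x)" if "t \<in> {x..y}" for t
  proof -
    have "\<bar>u t - u x\<bar> \<le> M * (t - x)"
      using has_integral_abs_le[OF u_int, of x t] h_bound that by auto
    also have "\<dots> \<le> M * (y - x)" using that \<open>0 \<le> M\<close> by (intro mult_left_mono) auto
    finally show ?thesis .
  qed
  have seg: "closed_segment (u x) (u y) \<subseteq> K"
    using assms(5,6) \<open>x \<le> y\<close> by (intro closed_segment_subset) (auto simp: is_interval_convex_1)
  then obtain \<xi> where \<xi>: "\<xi> \<in> closed_segment (u x) (u y)" "\<phi> (u y) - \<phi> (u x) = \<phi>' \<xi> * (u y - u x)"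
    using mvt_closed_segment[of "u x" "u y" \<phi> \<phi>'] \<phi>_deriv by blast
  have "((\<lambda>\<tau>. \<phi>' \<xi> * h \<tau> - \<phi>' (u \<tau>) * h \<tau>) has_integral (\<phi>' \<xi> * (u y - u x) - i)) {x..y}"
    using \<open>x \<le> y\<close> by (intro has_integral_diff has_integral_mult_right u_int g_int) auto
  then have "\<bar>\<phi>' \<xi> * (u y - u x) - i\<bar> \<le> e * M * (y - x)"
  proof (rule has_integral_abs_le[OF _ \<open>x \<le> y\<close>])
    fix \<tau> assume \<tau>: "\<tau> \<in> {x..y}"
    have "\<bar>\<xi> - u x\<bar> \<le> \<bar>u y - u x\<bar>"
      using \<xi>(1) by (auto simp: closed_segment_eq_real_ivl split: if_splits)
    then have "\<bar>\<xi> - u \<tau>\<bar> \<le> 2 * M * (y - x)" using u_lip[OF \<tau>] u_lip[of y] \<open>x \<le> y\<close> by auto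
    moreover have "u \<tau> \<in> K" "\<xi> \<in> K" using \<tau> assms(6) seg \<xi>(1) by auto
    ultimately have "\<bar>\<phi>' \<xi> - \<phi>' (u \<tau>)\<bar> \<le> e" using close[of "u \<tau>" \<xi>] by simp
    then show "\<bar>\<phi>' \<xi> * h \<tau> - \<phi>' (u \<tau>) * h \<tau>\<bar> \<le> e * M"
      using h_bound[OF \<tau>] unfolding left_diff_distrib[symmetric] abs_mult by (intro mult_mono) auto
  qed
  then show ?thesis using \<xi>(2) by simp
qed

lemma integrable_on_continuous_mult_bounded:
  fixes f h :: "real \<Rightarrow> real"
  assumes "continuous_on {a..b} f" "h integrable_on {a..b}" "\<And>\<tau>. \<tau> \<in> {a..b} \<Longrightarrow> \<bar>h \<tau>\<bar> \<le> M"
  shows "(\<lambda>\<tau>. f \<tau> * h \<tau>) integrable_on {a..b}"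
proof -
  have "bounded (f ` {a..b})"
    by (intro compact_imp_bounded compact_continuous_image assms(1) compact_Icc)
  moreover have "f \<in> borel_measurable (lebesgue_on {a..b})"
    by (intro continuous_imp_measurable_on_sets_lebesgue assms(1)) auto
  moreover have "h absolutely_integrable_on {a..b}"
    using assms(2,3) by (intro absolutely_integrable_integrable_bound[where g = "\<lambda>_. M"]) auto
  ultimately have "(\<lambda>\<tau>. f \<tau> * h \<tau>) absolutely_integrable_on {a..b}"
    by (intro absolutely_integrable_bounded_measurable_product_real) auto
  then show ?thesis by (simp add: absolutely_integrable_on_def)
qed

lemma has_integral_chain_rule:
  fixes u h \<phi> \<phi>' :: "real \<Rightarrow> real"
  assumes "a \<le> b"
    and u_int: "\<And>s t. a \<le> s \<Longrightarrow> s \<le> t \<Longrightarrow> t \<le> b \<Longrightarrow> (h has_integral (u t - u s)) {s..t}"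
    and h_bound: "\<And>\<tau>. \<tau> \<in> {a..b} \<Longrightarrow> \<bar>h \<tau>\<bar> \<le> M"
    and \<phi>_deriv: "\<And>v. v \<in> U \<Longrightarrow> (\<phi> has_real_derivative \<phi>' v) (at v)"
    and \<phi>'_cont: "continuous_on U \<phi>'"
    and "is_interval U" "u ` {a..b} \<subseteq> U"
  shows "((\<lambda>\<tau>. \<phi>' (u \<tau>) * h \<tau>) has_integral (\<phi> (u b) - \<phi> (u a))) {a..b}"
proof -
  have "0 \<le> M" using h_bound[of a] \<open>a \<le> b\<close> by auto
  have u_cont: "continuous_on {a..b} u"
    using u_int by (intro has_integral_increments_continuous_on) auto
  define K where "K = u ` {a..b}"
  have "compact K" "is_interval K" "K \<subseteq> U"
    unfolding K_def is_interval_connected_1 using assms(7)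
    by (auto intro: compact_continuous_image connected_continuous_image u_cont)
  then have "continuous_on K \<phi>'" using \<phi>'_cont continuous_on_subset by blast
  have "continuous_on {a..b} (\<lambda>\<tau>. \<phi>' (u \<tau>))"
    using continuous_on_compose2[OF \<open>continuous_on K \<phi>'\<close> u_cont] by (auto simp: K_def)
  then have g_int: "(\<lambda>\<tau>. \<phi>' (u \<tau>) * h \<tau>) integrable_on {a..b}"
    using u_int[of a b] h_bound \<open>a \<le> b\<close> by (intro integrable_on_continuous_mult_bounded) auto
  show ?thesis
  proof (rule has_integral_if_small_defects[OF \<open>a \<le> b\<close> g_int])
    fix e :: real assume "0 < e"
    then have "0 < e / (M + 1)" using \<open>0 \<le> M\<close> by simp
    then obtain d where "0 < d"
      and d: "\<And>p q. p \<in> K \<Longrightarrow> q \<in> K \<Longrightarrow> \<bar>q - p\<bar> < d \<Longrightarrow> \<bar>\<phi>' q - \<phi>' p\<bar> < e / (M + 1)"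
      using compact_uniformly_continuous[OF \<open>continuous_on K \<phi>'\<close> \<open>compact K\<close>]
      unfolding uniformly_continuous_on_def dist_real_def by blast
    have "\<bar>\<phi> (u y) - \<phi> (u x) - integral {x..y} (\<lambda>\<tau>. \<phi>' (u \<tau>) * h \<tau>)\<bar> \<le> e * (y - x)"
      if xy: "a \<le> x" "x \<le> y" "y \<le> b" "y - x < d / (2 * M + 1)" for x y
    proof -
      have "(2 * M + 1) * (y - x) < d" using xy \<open>0 \<le> M\<close> by (simp add: less_divide_eq mult.commute)
      then have "2 * M * (y - x) < d" using xy by (simp add: algebra_simps)
      have "\<bar>\<phi> (u y) - \<phi> (u x) - integral {x..y} (\<lambda>\<tau>. \<phi>' (u \<tau>) * h \<tau>)\<bar> \<le> e / (M + 1) * M * (y - x)"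
      proof (rule chain_rule_defect_le[OF \<open>x \<le> y\<close> _ integrable_integral _ \<open>is_interval K\<close>])
        show "(\<lambda>\<tau>. \<phi>' (u \<tau>) * h \<tau>) integrable_on {x..y}"
          using xy by (intro integrable_subinterval_real[OF g_int]) auto
        show "\<bar>\<phi>' q - \<phi>' p\<bar> \<le> e / (M + 1)"
          if "p \<in> K" "q \<in> K" "\<bar>q - p\<bar> \<le> 2 * M * (y - x)" for p q
          using d[OF that(1,2)] that(3) \<open>2 * M * (y - x) < d\<close> by simp
      qed (use xy u_int h_bound \<phi>_deriv \<open>K \<subseteq> U\<close> in \<open>auto simp: K_def\<close>)
      also have "e / (M + 1) * M * (y - x) \<le> e * (y - x)"
        using \<open>0 < e\<close> \<open>0 \<le> M\<close> xy by (intro mult_right_mono) (auto simp: field_simps)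
      finally show ?thesis .
    qed
    then show "\<exists>d>0. \<forall>x y. a \<le> x \<longrightarrow> x \<le> y \<longrightarrow> y \<le> b \<longrightarrow> y - x < d \<longrightarrow>
        \<bar>\<phi> (u y) - \<phi> (u x) - integral {x..y} (\<lambda>\<tau>. \<phi>' (u \<tau>) * h \<tau>)\<bar> \<le> e * (y - x)"
      using \<open>0 < d\<close> \<open>0 \<le> M\<close> by (intro exI[of _ "d / (2 * M + 1)"]) auto
  qed
qed

section \<open>Scalar autonomous equations\<close>

lemma first_hitting_time:
  fixes f :: "real \<Rightarrow> real"
  assumes f: "continuous_on {a..b} f" and "a \<le> b" "c < f a" "f b \<le> c"
  obtains z where "a < z" "z \<le> b" "f z = c" "\<And>\<tau>. a \<le> \<tau> \<Longrightarrow> \<tau> < z \<Longrightarrow> c < f \<tau>"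
proof -
  define Z where "Z = {a..b} \<inter> f -` {..c}"
  have "closed Z" unfolding Z_def by (rule continuous_closed_preimage[OF f]) auto
  moreover have "b \<in> Z" "bdd_below Z" using assms by (auto simp: Z_def)
  ultimately have zZ: "Inf Z \<in> Z" by (intro closed_contains_Inf) auto
  have before: "c < f \<tau>" if "a \<le> \<tau>" "\<tau> < Inf Z" for \<tau>
    using cInf_lower[of \<tau> Z] \<open>bdd_below Z\<close> that zZ by (force simp: Z_def)
  have "a \<le> Inf Z" "Inf Z \<le> b" "f (Inf Z) \<le> c" using zZ by (auto simp: Z_def)
  moreover obtain x where "a \<le> x" "x \<le> Inf Z" "f x = c"
    using IVT2'[of f "Inf Z" c a] calculation \<open>c < f a\<close> continuous_on_subset[OF f] by fastforce
  ultimately have "f (Inf Z) = c" using before by fastforce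
  moreover have "a \<noteq> Inf Z" using \<open>c < f a\<close> calculation by auto
  ultimately show thesis using that[of "Inf Z"] before \<open>a \<le> Inf Z\<close> \<open>Inf Z \<le> b\<close> by auto
qed

lemma strict_mono_on_if_DERIV_pos:
  fixes T T' :: "real \<Rightarrow> real"
  assumes "\<And>v. a < v \<Longrightarrow> v < b \<Longrightarrow> (T has_real_derivative T' v) (at v)"
    and "\<And>v. a < v \<Longrightarrow> v < b \<Longrightarrow> 0 < T' v"
  shows "strict_mono_on {a<..<b} T"
proof (rule strict_mono_onI)
  fix u v assume "u \<in> {a<..<b}" "v \<in> {a<..<b}" "u < v"
  show "T u < T v"
  proof (rule DERIV_pos_imp_increasing[OF \<open>u < v\<close>])
    fix x assume "u \<le> x" "x \<le> v"
    then have "a < x" "x < b" using \<open>u \<in> {a<..<b}\<close> \<open>v \<in> {a<..<b}\<close> by auto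
    then show "\<exists>y. (T has_real_derivative y) (at x) \<and> 0 < y"
      using assms by blast
  qed
qed

lemma the_inv_into_has_real_derivative:
  fixes T :: "real \<Rightarrow> real"
  assumes "open S" "inj_on T S" "continuous_on S T" "v \<in> S"
    and "(T has_real_derivative D) (at v)" "D \<noteq> 0"
  shows "(the_inv_into S T has_real_derivative inverse D) (at (T v))"
proof -
  have "(the_inv_into S T has_derivative (*) (inverse D)) (at (T v))"
  proof (rule has_derivative_inverse_strong[OF assms(1,4,3)])
    show "the_inv_into S T (T x) = x" if "x \<in> S" for x
      using the_inv_into_f_f[OF assms(2) that] .
    show "(T has_derivative (*) D) (at v)" using assms(5) by (simp add: has_field_derivative_def)
    show "(*) D \<circ> (*) (inverse D) = id" using assms(6) by (auto simp: fun_eq_iff)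
  qed
  then show ?thesis by (simp add: has_field_derivative_def)
qed

lemma ode_solution_by_time_map:
  fixes T G :: "real \<Rightarrow> real"
  assumes "a < 0" "0 < b"
    and T_deriv: "\<And>v. a < v \<Longrightarrow> v < b \<Longrightarrow> (T has_real_derivative 1 / G v) (at v)"
    and G_pos: "\<And>v. a < v \<Longrightarrow> v < b \<Longrightarrow> 0 < G v"
    and T_0: "T 0 = 0"
    and T_unbounded: "\<And>t. 0 \<le> t \<Longrightarrow> \<exists>v. 0 \<le> v \<and> v < b \<and> t \<le> T v"
  obtains w where "w 0 = 0"
    "\<And>t. 0 \<le> t \<Longrightarrow> 0 \<le> w t \<and> w t < b \<and> (w has_real_derivative G (w t)) (at t)"
    "\<And>t. 0 < t \<Longrightarrow> 0 < w t"
    "\<And>v. 0 \<le> v \<Longrightarrow> v < b \<Longrightarrow> \<exists>t\<ge>0. w t = v"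
proof -
  let ?S = "{a<..<b}"
  have T_cont: "continuous_on ?S T"
    by (intro continuous_at_imp_continuous_on ballI DERIV_isCont[OF T_deriv]) auto
  have "strict_mono_on ?S T"
    using T_deriv G_pos by (intro strict_mono_on_if_DERIV_pos) auto
  then have inj: "inj_on T ?S" by (rule strict_mono_on_imp_inj_on)
  define w where "w = the_inv_into ?S T"
  have w_T: "w (T v) = v" if "v \<in> ?S" for v
    using the_inv_into_f_f[OF inj that] by (simp add: w_def)
  have T_w: "\<exists>v. 0 \<le> v \<and> v < b \<and> w t = v \<and> T v = t" if t: "0 \<le> t" for t
  proof -
    obtain v1 where v1: "0 \<le> v1" "v1 < b" "t \<le> T v1" using T_unbounded[OF t] by blast
    moreover have "continuous_on {0..v1} T"
      using v1 \<open>a < 0\<close> by (intro continuous_on_subset[OF T_cont]) auto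
    ultimately obtain v where v: "0 \<le> v" "v \<le> v1" "T v = t"
      using IVT'[of T 0 t v1] T_0 t by auto
    then show ?thesis using w_T[of v] v1 \<open>a < 0\<close> by auto
  qed
  show thesis
  proof
    show "w 0 = 0" using w_T[of 0] T_0 assms(1,2) by simp
  next
    fix t :: real assume "0 \<le> t"
    then obtain v where v: "0 \<le> v" "v < b" "w t = v" "T v = t" using T_w by blast
    have "v \<in> ?S" using v \<open>a < 0\<close> by auto
    then have "(w has_real_derivative inverse (1 / G v)) (at (T v))"
      unfolding w_def using T_deriv[of v] G_pos[of v]
      by (intro the_inv_into_has_real_derivative[OF open_greaterThanLessThan inj T_cont]) auto
    then show "0 \<le> w t \<and> w t < b \<and> (w has_real_derivative G (w t)) (at t)"
      using v by simp
  next
    fix t :: real assume "0 < t"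
    then obtain v where "0 \<le> v" "w t = v" "T v = t" using T_w[of t] by auto
    then show "0 < w t" using T_0 \<open>0 < t\<close> by (cases "v = 0") auto
  next
    fix v :: real assume "0 \<le> v" "v < b"
    moreover have "0 \<le> T v"
      using strict_mono_on_leD[OF \<open>strict_mono_on ?S T\<close>, of 0 v] T_0 calculation \<open>a < 0\<close> by simp
    ultimately show "\<exists>t\<ge>0. w t = v" using w_T[of v] \<open>a < 0\<close> by auto
  qed
qed

lemma integral_inverse_unbounded_at_simple_zero:
  fixes G :: "real \<Rightarrow> real"
  assumes "0 < wp" "0 < L" "0 \<le> t"
    and G_cont: "continuous_on {0..<wp} G"
    and G_pos: "\<And>v. 0 \<le> v \<Longrightarrow> v < wp \<Longrightarrow> 0 < G v"
    and G_le: "\<And>v. 0 \<le> v \<Longrightarrow> v < wp \<Longrightarrow> G v \<le> L * (wp - v)"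
  obtains v where "0 \<le> v" "v < wp" "t \<le> integral {0..v} (\<lambda>u. 1 / G u)"
proof
  define v where "v = wp * (1 - exp (- L * t))"
  show v: "0 \<le> v" "v < wp"
    using assms(1-3) by (auto simp: v_def mult_le_cancel_left1)
  have "ln (wp - v) = ln wp - L * t"
    using \<open>0 < wp\<close> by (simp add: v_def algebra_simps ln_mult)
  have "((\<lambda>u. 1 / (L * (wp - u))) has_integral (- ln (wp - v) / L - - ln (wp - 0) / L)) {0..v}"
  proof (rule fundamental_theorem_of_calculus)
    fix u assume "u \<in> {0..v}"
    then have "((\<lambda>u. - ln (wp - u) / L) has_real_derivative 1 / (L * (wp - u))) (at u)"
      using v \<open>0 < L\<close> by (auto intro!: derivative_eq_intros simp: field_simps)
    then show "((\<lambda>u. - ln (wp - u) / L) has_vector_derivative 1 / (L * (wp - u))) (at u within {0..v})"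
      by (simp add: has_real_derivative_iff_has_vector_derivative has_vector_derivative_at_within)
  qed (use v in simp)
  also have "- ln (wp - v) / L - - ln (wp - 0) / L = t"
    using \<open>ln (wp - v) = ln wp - L * t\<close> \<open>0 < L\<close> by (simp add: field_simps)
  finally have lower: "((\<lambda>u. 1 / (L * (wp - u))) has_integral t) {0..v}" .
  have "integral {0..v} (\<lambda>u. 1 / (L * (wp - u))) \<le> integral {0..v} (\<lambda>u. 1 / G u)"
  proof (rule integral_le)
    show "(\<lambda>u. 1 / G u) integrable_on {0..v}"
      using v G_pos by (intro integrable_continuous_real continuous_intros
          continuous_on_subset[OF G_cont]) force+
    show "1 / (L * (wp - u)) \<le> 1 / G u" if "u \<in> {0..v}" for u
      using that v G_pos[of u] G_le[of u] by (intro divide_left_mono) auto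
  qed (use lower in blast)
  then show "t \<le> integral {0..v} (\<lambda>u. 1 / G u)"
    using lower by (simp add: integral_unique)
qed

lemma ode_solution_up_to_simple_zero:
  fixes G :: "real \<Rightarrow> real"
  assumes G_cont: "continuous_on UNIV G" and "0 < wp" "0 < L"
    and G_pos: "\<And>v. 0 \<le> v \<Longrightarrow> v < wp \<Longrightarrow> 0 < G v"
    and G_le: "\<And>v. 0 \<le> v \<Longrightarrow> v < wp \<Longrightarrow> G v \<le> L * (wp - v)"
  obtains w where "w 0 = 0"
    "\<And>t. 0 \<le> t \<Longrightarrow> 0 \<le> w t \<and> w t < wp \<and> (w has_real_derivative G (w t)) (at t)"
    "\<And>t. 0 < t \<Longrightarrow> 0 < w t" "\<And>v. 0 \<le> v \<Longrightarrow> v < wp \<Longrightarrow> \<exists>t\<ge>0. w t = v"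
proof -
  \<comment> \<open>the time map is defined slightly to the left of \<open>0\<close>, where \<open>G\<close> is still positive,
      so that the solution is differentiable at \<open>t = 0\<close>\<close>
  have "isCont G 0" using G_cont by (simp add: continuous_on_eq_continuous_at)
  then have "\<exists>r>0. \<forall>v. v \<noteq> 0 \<and> \<bar>0 - v\<bar> < r \<longrightarrow> 0 < G v"
    using G_pos[of 0] \<open>0 < wp\<close> by (intro LIM_fun_gt_zero) (auto simp: isCont_def)
  then obtain r where "0 < r" and r: "\<forall>v. v \<noteq> 0 \<and> \<bar>0 - v\<bar> < r \<longrightarrow> 0 < G v"
    by blast
  define a where "a = - r / 2"
  have "a < 0" using \<open>0 < r\<close> by (simp add: a_def)
  have G_pos': "0 < G v" if "a \<le> v" "v < wp" for v
    using G_pos[of v] r that \<open>0 < r\<close> by (cases "v < 0") (auto simp: a_def)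
  define T where "T v = integral {a..v} (\<lambda>u. 1 / G u) - integral {a..0} (\<lambda>u. 1 / G u)" for v
  have int_cont: "continuous_on {a..v} (\<lambda>u. 1 / G u)" if "v < wp" for v
    using G_pos' that by (intro continuous_intros continuous_on_subset[OF G_cont]) force+
  have T_deriv: "(T has_real_derivative 1 / G v) (at v)" if "a < v" "v < wp" for v
  proof -
    have "((\<lambda>x. integral {a..x} (\<lambda>u. 1 / G u)) has_real_derivative 1 / G v) (at v within {a..(v + wp) / 2})"
      using that by (intro integral_has_real_derivative int_cont) auto
    then have "((\<lambda>x. integral {a..x} (\<lambda>u. 1 / G u)) has_real_derivative 1 / G v) (at v)"
      using that at_within_Icc_at[of a v "(v + wp) / 2"] by simp
    from DERIV_diff[OF this DERIV_const] show ?thesis unfolding T_def[abs_def] by simp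
  qed
  have T_unbounded: "\<exists>v\<ge>0. v < wp \<and> t \<le> T v" if "0 \<le> t" for t
  proof -
    obtain v where v: "0 \<le> v" "v < wp" "t \<le> integral {0..v} (\<lambda>u. 1 / G u)"
      using integral_inverse_unbounded_at_simple_zero[OF \<open>0 < wp\<close> \<open>0 < L\<close> \<open>0 \<le> t\<close>
          continuous_on_subset[OF G_cont] G_pos G_le] by blast
    have "T v = integral {0..v} (\<lambda>u. 1 / G u)"
      using Henstock_Kurzweil_Integration.integral_combine[of a 0 v "\<lambda>u. 1 / G u"] v \<open>a < 0\<close>
        integrable_continuous_real[OF int_cont[OF \<open>v < wp\<close>]] by (simp add: T_def)
    then show ?thesis using v by auto
  qed
  have "T 0 = 0" by (simp add: T_def)
  obtain w where "w 0 = 0"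
    "\<And>t. 0 \<le> t \<Longrightarrow> 0 \<le> w t \<and> w t < wp \<and> (w has_real_derivative G (w t)) (at t)"
    "\<And>t. 0 < t \<Longrightarrow> 0 < w t" "\<And>v. 0 \<le> v \<Longrightarrow> v < wp \<Longrightarrow> \<exists>t\<ge>0. w t = v"
    by (rule ode_solution_by_time_map[OF \<open>a < 0\<close> \<open>0 < wp\<close> T_deriv _ \<open>T 0 = 0\<close> T_unbounded])
      (use G_pos' in auto)
  then show thesis by (rule that)
qed

lemma autonomous_ode_solution:
  fixes G G' :: "real \<Rightarrow> real"
  assumes G_deriv: "\<And>v. (G has_real_derivative G' v) (at v)"
    and G'_cont: "continuous_on UNIV G'"
    and "0 < G 0" "0 < W" "G W \<le> 0"
  shows "\<exists>w. w 0 = 0 \<and>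
    (\<forall>t\<ge>0. 0 \<le> w t \<and> 0 < G (w t) \<and> (w has_real_derivative G (w t)) (at t)) \<and>
    (\<forall>t>0. 0 < w t) \<and> (\<forall>v\<ge>0. (\<forall>u\<in>{0..v}. 0 < G u) \<longrightarrow> (\<exists>t\<ge>0. w t = v))"
proof -
  have G_cont: "continuous_on A G" for A
    using G_deriv by (intro continuous_at_imp_continuous_on ballI DERIV_isCont) blast
  obtain wp where wp: "0 < wp" "wp \<le> W" "G wp = 0" and G_pos: "\<And>v. 0 \<le> v \<Longrightarrow> v < wp \<Longrightarrow> 0 < G v"
    using first_hitting_time[OF G_cont, of 0 W 0] assms(3-5) by auto
  obtain B where B: "\<And>u. u \<in> {0..W} \<Longrightarrow> norm (G' u) \<le> B"
    using continuous_on_compact_bound[OF compact_Icc continuous_on_subset[OF G'_cont]] by blast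
  then have "0 < B + 1" using \<open>0 < W\<close> by (smt (verit) atLeastAtMost_iff norm_ge_zero)
  have G_le: "G v \<le> (B + 1) * (wp - v)" if "0 \<le> v" "v < wp" for v
  proof -
    obtain z where z: "v < z" "z < wp" "G wp - G v = (wp - v) * G' z"
      using MVT2[OF \<open>v < wp\<close>, of G G'] G_deriv by blast
    have "- G' z \<le> B + 1" using B[of z] z that wp by auto
    then have "(wp - v) * - G' z \<le> (wp - v) * (B + 1)" using that by (intro mult_left_mono) auto
    then show ?thesis using z wp by (simp add: algebra_simps)
  qed
  obtain w where w: "w 0 = 0"
    "\<And>t. 0 \<le> t \<Longrightarrow> 0 \<le> w t \<and> w t < wp \<and> (w has_real_derivative G (w t)) (at t)"
    "\<And>t. 0 < t \<Longrightarrow> 0 < w t" "\<And>v. 0 \<le> v \<Longrightarrow> v < wp \<Longrightarrow> \<exists>t\<ge>0. w t = v"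
    by (rule ode_solution_up_to_simple_zero[OF G_cont \<open>0 < wp\<close> \<open>0 < B + 1\<close> G_pos G_le]) auto
  have "v < wp" if "0 \<le> v" "\<forall>u\<in>{0..v}. 0 < G u" for v
  proof (rule ccontr)
    assume "\<not> v < wp"
    then have "wp \<in> {0..v}" using wp by simp
    then show False using that(2) wp by fastforce
  qed
  then show ?thesis using w G_pos by (intro exI[of _ w]) auto
qed

section \<open>The admissible set of the SIR model\<close>

text \<open>\<open>S_star = \<gamma> / bmin\<close> is the herd-immunity threshold for the smallest input. It is a locale
  parameter rather than a definition, so that \<open>gamma_eq\<close> can be used to eliminate \<open>\<gamma>\<close>.\<close>

locale sir_barrier =
  fixes \<gamma> bmin bmax Imax S_star :: real
  assumes gamma_pos: "0 < \<gamma>" and bmin_pos: "0 < bmin" and bmin_le_bmax: "bmin \<le> bmax"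
    and Imax_pos: "0 < Imax" and gamma_eq: "\<gamma> = bmin * S_star"
begin

lemma S_star_pos: "0 < S_star"
  using gamma_pos bmin_pos by (simp add: gamma_eq zero_less_mult_iff)

definition V :: "real \<times> real \<Rightarrow> real" where
  "V p = fst p + snd p - S_star * ln (fst p)"

lemma V_S_star_le: "0 < fst p \<Longrightarrow> V (S_star, snd p) \<le> V p"
  using ln_le_minus_one[of "fst p / S_star"] S_star_pos
  by (simp add: V_def ln_div field_simps mult_le_cancel_left_pos)

text \<open>The trajectory through \<open>q\<close> under the constant input \<open>bmin\<close>, parametrized by the cumulative
  incidence \<open>v = \<integral> I\<close>: \<open>S' = - bmin S I\<close> gives \<open>S = S\<^sub>0 exp (- bmin v)\<close>, and \<open>(S + I)' = - \<gamma> I\<close>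
  gives \<open>S + I = S\<^sub>0 + I\<^sub>0 - \<gamma> v\<close>.\<close>

definition orbit :: "real \<times> real \<Rightarrow> real \<Rightarrow> real \<times> real" where
  "orbit q v = (fst q * exp (- bmin * v), fst q + snd q - \<gamma> * v - fst q * exp (- bmin * v))"

lemma orbit_0 [simp]: "orbit q 0 = q"
  by (simp add: orbit_def)

lemma V_orbit: "0 < fst q \<Longrightarrow> V (orbit q v) = V q"
  unfolding V_def orbit_def by (simp add: ln_mult gamma_eq algebra_simps)

lemma snd_orbit_has_real_derivative:
  "((\<lambda>v. snd (orbit q v)) has_real_derivative bmin * (fst (orbit q v) - S_star)) (at v)"
  unfolding orbit_def by (auto intro!: derivative_eq_intros simp: gamma_eq algebra_simps)

lemma orbit_has_vector_derivative:
  assumes "(w has_real_derivative snd (orbit q (w t))) (at t within X)"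
  shows "((\<lambda>t. orbit q (w t)) has_vector_derivative sir_f \<gamma> (orbit q (w t)) bmin) (at t within X)"
proof -
  have "((\<lambda>t. fst (orbit q (w t))) has_real_derivative
      - bmin * fst (orbit q (w t)) * snd (orbit q (w t))) (at t within X)"
    using assms by (auto intro!: derivative_eq_intros simp: orbit_def)
  moreover have "((\<lambda>t. snd (orbit q (w t))) has_real_derivative
      bmin * (fst (orbit q (w t)) - S_star) * snd (orbit q (w t))) (at t within X)"
    using DERIV_chain2[OF snd_orbit_has_real_derivative assms] by simp
  ultimately show ?thesis
    using has_vector_derivative_Pair[of "\<lambda>t. fst (orbit q (w t))" _ t X "\<lambda>t. snd (orbit q (w t))"]
    by (simp add: has_real_derivative_iff_has_vector_derivative sir_f_def gamma_eq algebra_simps)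
qed

lemma snd_orbit_le:
  assumes "fst q \<le> S_star" "0 \<le> v"
  shows "snd (orbit q v) \<le> snd q"
proof -
  have "fst q * (1 - exp (- bmin * v)) \<le> \<gamma> * v"
  proof (cases "fst q \<le> 0")
    case True
    have "exp (- bmin * v) \<le> 1" using assms bmin_pos by simp
    then have "fst q * (1 - exp (- bmin * v)) \<le> 0" using True by (simp add: mult_nonpos_nonneg)
    moreover have "0 \<le> \<gamma> * v" using assms gamma_pos by simp
    ultimately show ?thesis by linarith
  next
    case False
    have "1 - exp (- bmin * v) \<le> bmin * v" using exp_ge_add_one_self[of "- bmin * v"] by simp
    then have "fst q * (1 - exp (- bmin * v)) \<le> fst q * (bmin * v)"
      using False by (simp add: mult_left_mono)
    also have "\<dots> \<le> S_star * (bmin * v)"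
      using assms bmin_pos by (simp add: mult_right_mono)
    also have "\<dots> = \<gamma> * v" by (simp add: gamma_eq)
    finally show ?thesis .
  qed
  then show ?thesis by (simp add: orbit_def algebra_simps)
qed

lemma cumulative_incidence_exists:
  assumes "0 < snd q"
  shows "\<exists>w. w 0 = 0 \<and> (\<forall>t\<ge>0. 0 \<le> w t \<and> (w has_real_derivative snd (orbit q (w t))) (at t))"
proof -
  define W where "W = (2 * \<bar>fst q\<bar> + snd q) / \<gamma> + 1"
  have "0 < W" using assms gamma_pos by (simp add: W_def add_nonneg_pos)
  have "exp (- bmin * W) \<le> 1" using bmin_pos \<open>0 < W\<close> by simp
  then have "\<bar>fst q * exp (- bmin * W)\<bar> \<le> \<bar>fst q\<bar>" by (simp add: abs_mult mult_left_le)
  then have "- \<bar>fst q\<bar> \<le> fst q * exp (- bmin * W)" by linarith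
  moreover have "\<gamma> * W = 2 * \<bar>fst q\<bar> + snd q + \<gamma>" using gamma_pos by (simp add: W_def field_simps)
  ultimately have "snd (orbit q W) \<le> 0" using gamma_pos by (simp add: orbit_def)
  moreover have "continuous_on UNIV (\<lambda>v. bmin * (fst (orbit q v) - S_star))"
    by (auto intro!: continuous_intros simp: orbit_def)
  moreover have "0 < snd (orbit q 0)" using assms by simp
  ultimately show ?thesis
    using autonomous_ode_solution[OF snd_orbit_has_real_derivative _ _ \<open>0 < W\<close>, of q] by auto
qed

lemma orbit_is_solution:
  assumes "w 0 = 0" and w: "\<And>t. 0 \<le> t \<Longrightarrow> (w has_real_derivative snd (orbit q (w t))) (at t)"
  shows "is_solution \<gamma> (\<lambda>_. bmin) t0 q (\<lambda>t. orbit q (w (t - t0)))"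
proof -
  have deriv: "((\<lambda>t. orbit q (w (t - t0))) has_vector_derivative sir_f \<gamma> (orbit q (w (t - t0))) bmin) (at t)"
    if "t0 \<le> t" for t
  proof (rule orbit_has_vector_derivative)
    have "((\<lambda>s. s - t0) has_real_derivative 1) (at t)" by (auto intro!: derivative_eq_intros)
    from DERIV_chain2[where f = w and g = "\<lambda>s. s - t0", OF w this] that
    show "((\<lambda>s. w (s - t0)) has_real_derivative snd (orbit q (w (t - t0)))) (at t)" by simp
  qed
  show ?thesis
    unfolding is_solution_def
  proof (intro conjI allI impI)
    fix t assume "t0 \<le> t"
    then have "((\<lambda>s. sir_f \<gamma> (orbit q (w (s - t0))) bmin) has_integral
        (orbit q (w (t - t0)) - orbit q (w (t0 - t0)))) {t0..t}"
      using deriv by (intro fundamental_theorem_of_calculus) (auto intro: has_vector_derivative_at_within)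
    then show "((\<lambda>s. sir_f \<gamma> (orbit q (w (s - t0))) bmin) has_integral (orbit q (w (t - t0)) - q)) {t0..t}"
      using \<open>w 0 = 0\<close> by simp
  qed (use \<open>w 0 = 0\<close> in simp)
qed

lemma mem_admissible_set:
  assumes "0 < snd q" "snd q \<le> Imax" and below: "fst q \<le> S_star \<or> V q \<le> V (S_star, Imax)"
  shows "q \<in> admissible_set \<gamma> bmin bmax Imax t0"
proof -
  obtain w where "w 0 = 0"
    and w: "\<And>t. 0 \<le> t \<Longrightarrow> 0 \<le> w t \<and> (w has_real_derivative snd (orbit q (w t))) (at t)"
    using cumulative_incidence_exists[OF assms(1)] by blast
  define y where "y t = orbit q (w (t - t0))" for t
  have "is_solution \<gamma> (\<lambda>_. bmin) t0 q y"
    unfolding y_def using \<open>w 0 = 0\<close> w by (intro orbit_is_solution) auto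
  moreover have "y t \<in> G_set Imax" if "t0 \<le> t" for t
  proof (cases "fst q \<le> S_star")
    case True
    then show ?thesis
      using snd_orbit_le[OF True] w[of "t - t0"] that assms(2) by (force simp: G_set_def y_def)
  next
    case False
    then have "0 < fst q" using S_star_pos by linarith
    then have "V (S_star, snd (y t)) \<le> V (y t)"
      by (intro V_S_star_le) (simp add: y_def orbit_def)
    also have "V (y t) = V q" using V_orbit \<open>0 < fst q\<close> by (simp add: y_def)
    also have "\<dots> \<le> V (S_star, Imax)" using below False by simp
    finally show ?thesis by (simp add: G_set_def V_def)
  qed
  moreover have "admissible_input bmin bmax t0 (\<lambda>_. bmin)"
    using bmin_le_bmax by (simp add: admissible_input_def)
  ultimately show ?thesis using assms unfolding admissible_set_def G_set_def by auto
qed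

context
  fixes \<beta> :: "real \<Rightarrow> real" and y :: "real \<Rightarrow> real \<times> real" and q :: "real \<times> real" and t0 :: real
  assumes input: "admissible_input bmin bmax t0 \<beta>"
    and solution: "is_solution \<gamma> \<beta> t0 q y"
begin

lemma trajectory_start: "y t0 = q"
  using solution by (simp add: is_solution_def)

lemma trajectory_increment:
  assumes "t0 \<le> s" "s \<le> t"
  shows "((\<lambda>\<tau>. sir_f \<gamma> (y \<tau>) (\<beta> \<tau>)) has_integral (y t - y s)) {s..t}"
proof (rule has_integral_increment[OF _ assms])
  show "((\<lambda>\<tau>. sir_f \<gamma> (y \<tau>) (\<beta> \<tau>)) has_integral (y t - y t0)) {t0..t}" if "t0 \<le> t" for t
    using solution that by (simp add: is_solution_def)
qed

lemma fst_trajectory_increment: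
  assumes "t0 \<le> s" "s \<le> t"
  shows "((\<lambda>\<tau>. - \<beta> \<tau> * fst (y \<tau>) * snd (y \<tau>)) has_integral (fst (y t) - fst (y s))) {s..t}"
  using has_integral_linear[OF trajectory_increment[OF assms] bounded_linear_fst]
  by (simp add: o_def sir_f_def)

lemma snd_trajectory_increment:
  assumes "t0 \<le> s" "s \<le> t"
  shows "((\<lambda>\<tau>. \<beta> \<tau> * fst (y \<tau>) * snd (y \<tau>) - \<gamma> * snd (y \<tau>)) has_integral (snd (y t) - snd (y s))) {s..t}"
  using has_integral_linear[OF trajectory_increment[OF assms] bounded_linear_snd]
  by (simp add: o_def sir_f_def)

lemma trajectory_continuous: "continuous_on {t0..T} y"
  using trajectory_increment[of t0] by (intro has_integral_increments_continuous_on) auto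

lemma input_bounds: "t0 \<le> t \<Longrightarrow> bmin \<le> \<beta> t \<and> \<beta> t \<le> bmax"
  using input by (simp add: admissible_input_def)

lemma snd_trajectory_mono:
  assumes "t0 \<le> s" "s \<le> t" and above: "\<And>\<tau>. \<tau> \<in> {s..t} \<Longrightarrow> S_star \<le> fst (y \<tau>) \<and> 0 \<le> snd (y \<tau>)"
  shows "snd (y s) \<le> snd (y t)"
proof -
  have "0 \<le> snd (y t) - snd (y s)"
  proof (rule has_integral_nonneg[OF snd_trajectory_increment[OF assms(1,2)]])
    fix \<tau> assume \<tau>: "\<tau> \<in> {s..t}"
    then have "\<gamma> \<le> \<beta> \<tau> * fst (y \<tau>)"
      using input_bounds[of \<tau>] above[OF \<tau>] assms S_star_pos bmin_pos
      by (auto simp: gamma_eq intro!: mult_mono)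
    then have "\<gamma> * snd (y \<tau>) \<le> \<beta> \<tau> * fst (y \<tau>) * snd (y \<tau>)"
      using above[OF \<tau>] by (intro mult_right_mono) auto
    then show "0 \<le> \<beta> \<tau> * fst (y \<tau>) * snd (y \<tau>) - \<gamma> * snd (y \<tau>)" by simp
  qed
  then show ?thesis by simp
qed

lemma snd_trajectory_ge:
  assumes "0 < snd q" "t0 \<le> t" and above: "\<And>\<tau>. \<tau> \<in> {t0..t} \<Longrightarrow> S_star \<le> fst (y \<tau>)"
  shows "snd q \<le> snd (y t)"
proof -
  \<comment> \<open>\<open>I\<close> cannot reach \<open>0\<close>: it does not decrease as long as it is nonnegative\<close>
  have pos: "0 < snd (y \<tau>)" if \<tau>: "\<tau> \<in> {t0..t}" for \<tau>
  proof (rule ccontr)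
    assume "\<not> 0 < snd (y \<tau>)"
    moreover have "continuous_on {t0..\<tau>} (\<lambda>s. snd (y s))"
      by (intro continuous_intros trajectory_continuous)
    ultimately obtain z where z: "t0 < z" "z \<le> \<tau>" "snd (y z) = 0"
      and before: "\<And>s. t0 \<le> s \<Longrightarrow> s < z \<Longrightarrow> 0 < snd (y s)"
      using first_hitting_time[of t0 \<tau> "\<lambda>s. snd (y s)" 0] \<tau> assms(1) trajectory_start by auto
    have "snd (y t0) \<le> snd (y z)"
    proof (rule snd_trajectory_mono)
      fix s assume "s \<in> {t0..z}"
      then show "S_star \<le> fst (y s) \<and> 0 \<le> snd (y s)"
        using above[of s] before[of s] z \<tau> by (cases "s = z") auto
    qed (use z in auto)
    then show False using z assms(1) trajectory_start by simp
  qed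
  show ?thesis
    using snd_trajectory_mono[OF order_refl assms(2)] pos above trajectory_start
    by (simp add: less_imp_le)
qed

lemma ln_fst_trajectory_increment:
  assumes "t0 \<le> t" and pos: "\<And>\<tau>. \<tau> \<in> {t0..t} \<Longrightarrow> 0 < fst (y \<tau>)"
  shows "((\<lambda>\<tau>. - \<beta> \<tau> * snd (y \<tau>)) has_integral (ln (fst (y t)) - ln (fst (y t0)))) {t0..t}"
proof -
  obtain B where B: "\<And>\<tau>. \<tau> \<in> {t0..t} \<Longrightarrow> norm (y \<tau>) \<le> B"
    using continuous_on_compact_bound[OF compact_Icc trajectory_continuous] by blast
  have rate_bound: "\<bar>- \<beta> \<tau> * fst (y \<tau>) * snd (y \<tau>)\<bar> \<le> bmax * B * B" if "\<tau> \<in> {t0..t}" for \<tau>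
  proof -
    have "\<bar>fst (y \<tau>)\<bar> \<le> B" "\<bar>snd (y \<tau>)\<bar> \<le> B"
      using B[OF that] norm_fst_le[of "fst (y \<tau>)" "snd (y \<tau>)"] norm_snd_le[of "snd (y \<tau>)" "fst (y \<tau>)"]
      by auto
    moreover have "\<bar>\<beta> \<tau>\<bar> \<le> bmax" using input_bounds[of \<tau>] that bmin_pos by auto
    ultimately show ?thesis by (simp add: abs_mult mult_mono')
  qed
  have "((\<lambda>\<tau>. inverse (fst (y \<tau>)) * (- \<beta> \<tau> * fst (y \<tau>) * snd (y \<tau>))) has_integral
      (ln (fst (y t)) - ln (fst (y t0)))) {t0..t}"
  proof (rule has_integral_chain_rule[OF \<open>t0 \<le> t\<close> _ rate_bound])
    show "((\<lambda>\<tau>. - \<beta> \<tau> * fst (y \<tau>) * snd (y \<tau>)) has_integral (fst (y t') - fst (y s))) {s..t'}"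
      if "t0 \<le> s" "s \<le> t'" for s t'
      using fst_trajectory_increment[OF that] .
    show "(ln has_real_derivative inverse v) (at v)" if "v \<in> {0<..}" for v
      using that by (auto intro: DERIV_ln)
  qed (use pos in \<open>auto intro!: continuous_intros simp: is_interval_def\<close>)
  then show ?thesis
  proof (rule has_integral_eq[rotated])
    fix \<tau> assume "\<tau> \<in> {t0..t}"
    then show "inverse (fst (y \<tau>)) * (- \<beta> \<tau> * fst (y \<tau>) * snd (y \<tau>)) = - \<beta> \<tau> * snd (y \<tau>)"
      using pos[of \<tau>] by simp
  qed
qed

lemma V_trajectory_ge:
  assumes "0 < snd q" "t0 \<le> t" and above: "\<And>\<tau>. \<tau> \<in> {t0..t} \<Longrightarrow> S_star \<le> fst (y \<tau>)"
  shows "V q \<le> V (y t)"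
proof -
  have pos: "0 < fst (y \<tau>)" if "\<tau> \<in> {t0..t}" for \<tau> using above[OF that] S_star_pos by linarith
  have "((\<lambda>\<tau>. - \<beta> \<tau> * fst (y \<tau>) * snd (y \<tau>) + (\<beta> \<tau> * fst (y \<tau>) * snd (y \<tau>) - \<gamma> * snd (y \<tau>))
        - S_star * (- \<beta> \<tau> * snd (y \<tau>)))
      has_integral ((fst (y t) - fst (y t0)) + (snd (y t) - snd (y t0))
        - S_star * (ln (fst (y t)) - ln (fst (y t0))))) {t0..t}"
    by (intro has_integral_diff has_integral_add has_integral_mult_right
        fst_trajectory_increment[OF order_refl \<open>t0 \<le> t\<close>]
        snd_trajectory_increment[OF order_refl \<open>t0 \<le> t\<close>] ln_fst_trajectory_increment[OF \<open>t0 \<le> t\<close> pos])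
  then have "((\<lambda>\<tau>. snd (y \<tau>) * (S_star * \<beta> \<tau> - \<gamma>)) has_integral (V (y t) - V (y t0))) {t0..t}"
    by (simp add: V_def algebra_simps)
  then have "0 \<le> V (y t) - V (y t0)"
  proof (rule has_integral_nonneg)
    fix \<tau> assume \<tau>: "\<tau> \<in> {t0..t}"
    have "0 < snd (y \<tau>)"
      using snd_trajectory_ge[OF \<open>0 < snd q\<close>, of \<tau>] above \<tau> \<open>0 < snd q\<close> by auto
    moreover have "\<gamma> \<le> S_star * \<beta> \<tau>"
      using input_bounds[of \<tau>] \<tau> S_star_pos by (simp add: gamma_eq mult.commute)
    ultimately show "0 \<le> snd (y \<tau>) * (S_star * \<beta> \<tau> - \<gamma>)" by simp
  qed
  then show ?thesis using trajectory_start by simp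
qed

lemma fst_trajectory_reaches_S_star:
  assumes "0 < snd q"
  shows "\<exists>t\<ge>t0. fst (y t) \<le> S_star"
proof (rule ccontr)
  assume "\<not> ?thesis"
  then have above: "S_star < fst (y t)" if "t0 \<le> t" for t
    using that not_le by blast
  \<comment> \<open>while \<open>S \<ge> S_star\<close>, \<open>I\<close> stays above \<open>snd q\<close>, so \<open>S\<close> decreases at least at the rate \<open>c\<close>\<close>
  define c where "c = bmin * S_star * snd q"
  have "0 < c" using bmin_pos S_star_pos \<open>0 < snd q\<close> by (simp add: c_def)
  define T where "T = t0 + (fst q - S_star) / c + 1"
  have "t0 \<le> T" using above[of t0] trajectory_start \<open>0 < c\<close> by (simp add: T_def)
  have "fst (y T) - fst (y t0) \<le> - c * (T - t0)"
  proof (rule has_integral_le[OF fst_trajectory_increment[OF order_refl \<open>t0 \<le> T\<close>]])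
    show "((\<lambda>_. - c) has_integral - c * (T - t0)) {t0..T}"
      using has_integral_const_real[of "- c" t0 T] \<open>t0 \<le> T\<close> by (simp add: mult.commute)
    fix \<tau> assume \<tau>: "\<tau> \<in> {t0..T}"
    have "snd q \<le> snd (y \<tau>)"
      using snd_trajectory_ge[OF \<open>0 < snd q\<close>, of \<tau>] above \<tau> by (auto intro: less_imp_le)
    moreover have "S_star \<le> fst (y \<tau>)" "bmin \<le> \<beta> \<tau>"
      using above[of \<tau>] input_bounds[of \<tau>] \<tau> by auto
    ultimately have "c \<le> \<beta> \<tau> * fst (y \<tau>) * snd (y \<tau>)"
      unfolding c_def using bmin_pos S_star_pos \<open>0 < snd q\<close>
      by (intro mult_mono) (auto intro: mult_nonneg_nonneg)
    then show "- \<beta> \<tau> * fst (y \<tau>) * snd (y \<tau>) \<le> - c" by simp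
  qed
  moreover have "- c * (T - t0) = S_star - fst q - c" using \<open>0 < c\<close> by (simp add: T_def field_simps)
  ultimately have "fst (y T) < S_star"
    using \<open>0 < c\<close> trajectory_start by simp
  then show False using above[OF \<open>t0 \<le> T\<close>] by simp
qed

end

lemma not_mem_admissible_set:
  assumes "S_star < fst q" "0 < snd q" "V (S_star, Imax) < V q"
  shows "q \<notin> admissible_set \<gamma> bmin bmax Imax t0"
proof
  assume "q \<in> admissible_set \<gamma> bmin bmax Imax t0"
  then obtain \<beta> y where input: "admissible_input bmin bmax t0 \<beta>" and solution: "is_solution \<gamma> \<beta> t0 q y"
    and constrained: "\<And>t. t0 \<le> t \<Longrightarrow> snd (y t) \<le> Imax"
    by (auto simp: admissible_set_def G_set_def)
  obtain t1 where "t0 \<le> t1" "fst (y t1) \<le> S_star"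
    using fst_trajectory_reaches_S_star[OF input solution \<open>0 < snd q\<close>] by blast
  moreover have "continuous_on {t0..t1} (\<lambda>t. fst (y t))"
    by (intro continuous_intros trajectory_continuous[OF input solution])
  ultimately obtain z where z: "t0 < z" "fst (y z) = S_star"
    and before: "\<And>t. t0 \<le> t \<Longrightarrow> t < z \<Longrightarrow> S_star < fst (y t)"
    using first_hitting_time[of t0 t1 "\<lambda>t. fst (y t)" S_star] assms(1) trajectory_start[OF input solution]
    by auto
  \<comment> \<open>on reaching the threshold \<open>S_star\<close>, \<open>V\<close> has not decreased, so \<open>I\<close> exceeds \<open>Imax\<close>\<close>
  have "V q \<le> V (y z)"
  proof (rule V_trajectory_ge[OF input solution \<open>0 < snd q\<close>])
    fix \<tau> assume "\<tau> \<in> {t0..z}"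
    then show "S_star \<le> fst (y \<tau>)" using before[of \<tau>] z by (cases "\<tau> = z") auto
  qed (use z in auto)
  then have "Imax < snd (y z)"
    using assms(3) z by (simp add: V_def prod_eq_iff)
  then show False using constrained[of z] z by simp
qed

lemma open_V_less: "open {q. 0 < fst q \<and> V q < c}"
  and open_V_greater: "open {q. 0 < fst q \<and> c < V q}"
proof -
  have "continuous_on {q. 0 < fst q} V" unfolding V_def by (intro continuous_intros) auto
  moreover have "open {q :: real \<times> real. 0 < fst q}" by (intro open_Collect_less continuous_intros)
  ultimately have "open ({q. 0 < fst q} \<inter> V -` {..<c})" "open ({q. 0 < fst q} \<inter> V -` {c<..})"
    by (auto intro: continuous_open_preimage)
  moreover have "{q. 0 < fst q \<and> V q < c} = {q. 0 < fst q} \<inter> V -` {..<c}"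
    "{q. 0 < fst q \<and> c < V q} = {q. 0 < fst q} \<inter> V -` {c<..}" by auto
  ultimately show "open {q. 0 < fst q \<and> V q < c}" "open {q. 0 < fst q \<and> c < V q}" by simp_all
qed

lemma interior_admissible_set:
  assumes "0 < snd p" "snd p < Imax" "fst p < S_star \<or> (0 < fst p \<and> V p < V (S_star, Imax))"
  shows "p \<in> interior (admissible_set \<gamma> bmin bmax Imax t0)"
proof -
  let ?P = "{q. 0 < snd q} \<inter> {q. snd q < Imax} \<inter> ({q. fst q < S_star} \<union> {q. 0 < fst q \<and> V q < V (S_star, Imax)})"
  have "open ?P" by (intro open_Int open_Un open_V_less open_Collect_less continuous_intros)
  moreover have "?P \<subseteq> admissible_set \<gamma> bmin bmax Imax t0"
  proof
    fix q assume "q \<in> ?P"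
    then show "q \<in> admissible_set \<gamma> bmin bmax Imax t0" by (intro mem_admissible_set) auto
  qed
  moreover have "p \<in> ?P" using assms by auto
  ultimately show ?thesis by (meson interiorI)
qed

lemma not_mem_closure_admissible_set:
  assumes "S_star < fst p" "0 < snd p" "V (S_star, Imax) < V p"
  shows "p \<notin> closure (admissible_set \<gamma> bmin bmax Imax t0)"
proof -
  let ?N = "{q. S_star < fst q} \<inter> {q. 0 < snd q} \<inter> {q. 0 < fst q \<and> V (S_star, Imax) < V q}"
  have "open ?N" by (intro open_Int open_V_greater open_Collect_less continuous_intros)
  moreover have "?N \<inter> admissible_set \<gamma> bmin bmax Imax t0 = {}" using not_mem_admissible_set by blast
  ultimately have "?N \<inter> closure (admissible_set \<gamma> bmin bmax Imax t0) = {}"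
    by (simp add: open_Int_closure_eq_empty)
  moreover have "p \<in> ?N" using assms S_star_pos by auto
  ultimately show ?thesis by blast
qed

lemma mem_frontier_admissible_set:
  assumes "0 < snd p" "snd p \<le> Imax" "S_star < fst p" "V p = V (S_star, Imax)"
  shows "p \<in> frontier (admissible_set \<gamma> bmin bmax Imax t0)"
proof -
  let ?A = "admissible_set \<gamma> bmin bmax Imax t0"
  have "p \<in> ?A" using assms by (intro mem_admissible_set) auto
  moreover have "p \<notin> interior ?A"
  proof
    assume "p \<in> interior ?A"
    then obtain e where "0 < e" "ball p e \<subseteq> ?A" by (auto simp: mem_interior)
    \<comment> \<open>raising \<open>I\<close> slightly increases \<open>V\<close>\<close>
    moreover have "(fst p, snd p + e / 2) \<in> ball p e"
      using \<open>0 < e\<close> by (cases p) (simp add: dist_Pair_Pair dist_real_def)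
    moreover have "(fst p, snd p + e / 2) \<notin> ?A"
      using assms \<open>0 < e\<close> by (intro not_mem_admissible_set) (auto simp: V_def)
    ultimately show False by blast
  qed
  ultimately show ?thesis using closure_subset by (auto simp: frontier_def)
qed

lemma frontier_admissible_set_iff:
  assumes "0 < snd p" "snd p < Imax"
  shows "p \<in> frontier (admissible_set \<gamma> bmin bmax Imax t0) \<longleftrightarrow> S_star < fst p \<and> V p = V (S_star, Imax)"
proof
  let ?A = "admissible_set \<gamma> bmin bmax Imax t0"
  assume "p \<in> frontier ?A"
  then have "p \<notin> interior ?A" "p \<in> closure ?A" by (auto simp: frontier_def)
  have "V (S_star, snd p) < V (S_star, Imax)" using assms by (simp add: V_def)
  consider "fst p < S_star" | "fst p = S_star" | "S_star < fst p" by linarith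
  then show "S_star < fst p \<and> V p = V (S_star, Imax)"
  proof cases
    case 2
    then have "V p < V (S_star, Imax)" using \<open>V (S_star, snd p) < V (S_star, Imax)\<close> by (metis prod.collapse)
    then show ?thesis using interior_admissible_set[OF assms] \<open>p \<notin> interior ?A\<close> 2 S_star_pos by auto
  next
    case 3
    then show ?thesis
      using interior_admissible_set[OF assms] not_mem_closure_admissible_set[OF _ assms(1)]
        \<open>p \<notin> interior ?A\<close> \<open>p \<in> closure ?A\<close> S_star_pos
      by (cases "V p" "V (S_star, Imax)" rule: linorder_cases) auto
  qed (use interior_admissible_set[OF assms] \<open>p \<notin> interior ?A\<close> in auto)
qed (use assms mem_frontier_admissible_set in auto)

end

section \<open>The barrier curve\<close>

lemma one_add_less_exp: "0 < x \<Longrightarrow> 1 + x < exp (x::real)"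
  using exp_lower_Taylor_quadratic[of x] by (smt (verit) zero_less_power divide_pos_pos)

context sir_barrier
begin

lemma costate_inner_sir_f:
  "fst p \<noteq> 0 \<Longrightarrow> (1 - S_star / fst p, 1) \<bullet> sir_f \<gamma> p b = (b - bmin) * S_star * snd p"
  by (simp add: sir_f_def gamma_eq field_simps)

lemma costate_has_vector_derivative:
  assumes "(x has_vector_derivative sir_f \<gamma> (x t) bmin) (at t)" "fst (x t) \<noteq> 0"
  shows "((\<lambda>t. (1 - S_star / fst (x t), 1)) has_vector_derivative
     (bmin * snd (x t) * (1 - S_star / fst (x t)) - bmin * snd (x t),
      bmin * fst (x t) * (1 - S_star / fst (x t)) - bmin * fst (x t) + \<gamma>)) (at t)"
proof -
  have "((\<lambda>t. fst (x t)) has_real_derivative - bmin * fst (x t) * snd (x t)) (at t)"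
    using bounded_linear.has_vector_derivative[OF bounded_linear_fst assms(1)]
    by (simp add: has_real_derivative_iff_has_vector_derivative sir_f_def)
  then have "((\<lambda>t. 1 - S_star / fst (x t)) has_real_derivative
      bmin * snd (x t) * (1 - S_star / fst (x t)) - bmin * snd (x t)) (at t)"
    using assms(2) by (auto intro!: derivative_eq_intros simp: field_simps power2_eq_square)
  moreover have "bmin * fst (x t) * (1 - S_star / fst (x t)) - bmin * fst (x t) + \<gamma> = 0"
    using assms(2) by (simp add: gamma_eq field_simps)
  ultimately show ?thesis
    by (auto intro!: has_vector_derivative_Pair simp: has_real_derivative_iff_has_vector_derivative)
qed

lemma Lfg_S_star: "Lfg \<gamma> (S_star, I) b = (b - bmin) * S_star * I"
  by (simp add: Lfg_def sir_f_def gamma_eq algebra_simps)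

end

text \<open>\<open>w t\<close> is the cumulative incidence over the \<open>t\<close> time units before the barrier curve reaches
  \<open>(S_star, Imax)\<close>; going back in time along the orbit of that point decreases the parameter.\<close>

locale sir_barrier_curve = sir_barrier +
  fixes w :: "real \<Rightarrow> real"
  assumes w_0: "w 0 = 0"
    and w_solves: "\<And>t. 0 \<le> t \<Longrightarrow> 0 < snd (orbit (S_star, Imax) (- w t)) \<and>
                       (w has_real_derivative snd (orbit (S_star, Imax) (- w t))) (at t)"
    and w_pos: "\<And>t. 0 < t \<Longrightarrow> 0 < w t"
    and w_onto: "\<And>v. 0 \<le> v \<Longrightarrow> (\<forall>u\<in>{0..v}. 0 < snd (orbit (S_star, Imax) (- u))) \<Longrightarrow> \<exists>t\<ge>0. w t = v"
begin

definition curve :: "real \<Rightarrow> real \<times> real" where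
  "curve t = orbit (S_star, Imax) (- w (- t))"

definition costate :: "real \<Rightarrow> real \<times> real" where
  "costate t = (1 - S_star / fst (curve t), 1)"

lemma curve_0: "curve 0 = (S_star, Imax)"
  by (simp add: curve_def w_0)

lemma fst_curve: "fst (curve t) = S_star * exp (bmin * w (- t))"
  by (simp add: curve_def orbit_def)

lemma fst_curve_pos: "0 < fst (curve t)"
  using S_star_pos by (simp add: fst_curve)

lemma curve_has_vector_derivative:
  assumes "t \<le> 0"
  shows "(curve has_vector_derivative sir_f \<gamma> (curve t) bmin) (at t)"
proof -
  have "((\<lambda>s. w (- s)) has_real_derivative - snd (orbit (S_star, Imax) (- w (- t)))) (at t)"
    using DERIV_chain2[OF conjunct2[OF w_solves] DERIV_minus[OF DERIV_ident]] assms by simp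
  then have "((\<lambda>s. - w (- s)) has_real_derivative snd (orbit (S_star, Imax) (- w (- t)))) (at t)"
    using DERIV_minus by fastforce
  then show ?thesis unfolding curve_def[abs_def] by (rule orbit_has_vector_derivative)
qed

lemma costate_curve_has_vector_derivative:
  assumes "t \<le> 0"
  shows "(costate has_vector_derivative
     (bmin * snd (curve t) * fst (costate t) - bmin * snd (curve t) * snd (costate t),
      bmin * fst (curve t) * fst (costate t) + (- bmin * fst (curve t) + \<gamma>) * snd (costate t))) (at t)"
proof -
  have "fst (curve t) \<noteq> 0" using fst_curve_pos[of t] by simp
  then show ?thesis
    using costate_has_vector_derivative[OF curve_has_vector_derivative[OF assms]]
    unfolding costate_def[abs_def] by (simp add: algebra_simps)
qed

lemma curve_on_level_set:
  assumes "t < 0"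
  shows "S_star < fst (curve t) \<and> 0 < snd (curve t) \<and> snd (curve t) < Imax \<and> V (curve t) = V (S_star, Imax)"
proof -
  have "0 < bmin * w (- t)" using w_pos[of "- t"] assms bmin_pos by simp
  then have "S_star * (1 + bmin * w (- t)) < S_star * exp (bmin * w (- t))"
    using one_add_less_exp S_star_pos by simp
  then have "snd (curve t) < Imax"
    unfolding curve_def orbit_def using S_star_pos by (simp add: gamma_eq algebra_simps)
  moreover have "S_star < fst (curve t)"
    using \<open>0 < bmin * w (- t)\<close> S_star_pos by (simp add: fst_curve)
  moreover have "0 < snd (curve t)" using w_solves[of "- t"] assms by (simp add: curve_def)
  moreover have "V (curve t) = V (S_star, Imax)"
    using V_orbit S_star_pos by (simp add: curve_def)
  ultimately show ?thesis by blast
qed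

lemma curve_onto:
  assumes "S_star < fst p" "0 < snd p" "V p = V (S_star, Imax)"
  shows "\<exists>t<0. curve t = p"
proof -
  let ?z = "(S_star, Imax)"
  define u where "u = ln (fst p / S_star) / bmin"
  have "1 < fst p / S_star" using assms(1) S_star_pos by simp
  then have "0 < u" using bmin_pos by (simp add: u_def)
  have "fst (orbit ?z (- u)) = fst p"
    using bmin_pos S_star_pos assms(1) by (simp add: orbit_def u_def)
  moreover have "V (orbit ?z (- u)) = V p" using V_orbit S_star_pos assms(3) by simp
  ultimately have "orbit ?z (- u) = p" by (simp add: V_def prod_eq_iff)
  \<comment> \<open>going back along the orbit, \<open>I\<close> decreases because \<open>S > S_star\<close>\<close>
  have "snd p \<le> snd (orbit ?z (- s))" if "0 \<le> s" "s \<le> u" for s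
  proof -
    have "snd (orbit ?z (- u)) \<le> snd (orbit ?z (- s))"
    proof (rule DERIV_nonpos_imp_nonincreasing[OF \<open>s \<le> u\<close>])
      fix x assume "s \<le> x" "x \<le> u"
      then have "S_star \<le> fst (orbit ?z (- x))" using that S_star_pos bmin_pos by (simp add: orbit_def)
      then show "\<exists>d. ((\<lambda>s. snd (orbit ?z (- s))) has_real_derivative d) (at x) \<and> d \<le> 0"
        using DERIV_chain2[OF snd_orbit_has_real_derivative DERIV_minus[OF DERIV_ident]] bmin_pos
        by (intro exI conjI) (auto simp: mult_nonneg_nonneg)
    qed
    then show ?thesis using \<open>orbit ?z (- u) = p\<close> by simp
  qed
  then obtain t where "0 \<le> t" "w t = u"
    using w_onto[of u] \<open>0 < u\<close> assms(2) by fastforce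
  moreover have "t \<noteq> 0" using calculation \<open>0 < u\<close> w_0 by auto
  ultimately show ?thesis using \<open>orbit ?z (- u) = p\<close> by (intro exI[of _ "- t"]) (simp add: curve_def)
qed

lemma barrier_eq_curve:
  "barrier \<gamma> bmin bmax Imax t0 \<inter> {p \<in> Pi_set. 0 < snd p} = curve ` {t \<in> {..0}. t < 0} \<inter> {p \<in> Pi_set. 0 < snd p}"
proof (intro equalityI subsetI)
  fix p assume p: "p \<in> barrier \<gamma> bmin bmax Imax t0 \<inter> {p \<in> Pi_set. 0 < snd p}"
  then have "S_star < fst p \<and> V p = V (S_star, Imax)"
    using frontier_admissible_set_iff[of p] by (auto simp: barrier_def G_minus_def)
  then show "p \<in> curve ` {t \<in> {..0}. t < 0} \<inter> {p \<in> Pi_set. 0 < snd p}"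
    using curve_onto[of p] p by force
next
  fix p assume "p \<in> curve ` {t \<in> {..0}. t < 0} \<inter> {p \<in> Pi_set. 0 < snd p}"
  then obtain t where "t < 0" "p = curve t" "p \<in> Pi_set" by auto
  then show "p \<in> barrier \<gamma> bmin bmax Imax t0 \<inter> {p \<in> Pi_set. 0 < snd p}"
    using curve_on_level_set[of t] frontier_admissible_set_iff[of p t0]
    by (auto simp: barrier_def G_minus_def)
qed

lemma snd_curve_pos: "t \<le> 0 \<Longrightarrow> 0 < snd (curve t)"
  using w_solves[of "- t"] by (simp add: curve_def)

lemma curve_has_integral:
  assumes "s \<le> t" "t \<le> 0"
  shows "((\<lambda>\<tau>. sir_f \<gamma> (curve \<tau>) bmin) has_integral (curve t - curve s)) {s..t}"
proof (rule fundamental_theorem_of_calculus)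
  fix x assume "x \<in> {s..t}"
  then show "(curve has_vector_derivative sir_f \<gamma> (curve x) bmin) (at x within {s..t})"
    using \<open>t \<le> 0\<close> by (intro has_vector_derivative_at_within[OF curve_has_vector_derivative]) auto
qed (fact assms(1))

lemma costate_has_integral:
  assumes "s \<le> t" "t \<le> 0"
  shows "((\<lambda>\<tau>. (bmin * snd (curve \<tau>) * fst (costate \<tau>) - bmin * snd (curve \<tau>) * snd (costate \<tau>),
            bmin * fst (curve \<tau>) * fst (costate \<tau>) + (- bmin * fst (curve \<tau>) + \<gamma>) * snd (costate \<tau>)))
      has_integral (costate t - costate s)) {s..t}"
proof (rule fundamental_theorem_of_calculus)
  fix x assume "x \<in> {s..t}"
  then show "(costate has_vector_derivative
      (bmin * snd (curve x) * fst (costate x) - bmin * snd (curve x) * snd (costate x),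
       bmin * fst (curve x) * fst (costate x) + (- bmin * fst (curve x) + \<gamma>) * snd (costate x)))
      (at x within {s..t})"
    using \<open>t \<le> 0\<close> by (intro has_vector_derivative_at_within[OF costate_curve_has_vector_derivative]) auto
qed (fact assms(1))

lemma Lfg_curve_0: "Lfg \<gamma> (curve 0) bmin = 0"
  by (simp add: curve_0 Lfg_S_star)

lemma Lfg_curve_0_le: "bmin \<le> b \<Longrightarrow> Lfg \<gamma> (curve 0) bmin \<le> Lfg \<gamma> (curve 0) b"
  using Imax_pos S_star_pos by (simp add: curve_0 Lfg_S_star)

lemma costate_0: "costate 0 = (0, 1)"
  using S_star_pos by (simp add: costate_def curve_0)

lemma fst_costate_less_snd: "fst (costate t) < snd (costate t)"
  using S_star_pos fst_curve_pos[of t] by (simp add: costate_def)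

lemma costate_inner_curve: "costate t \<bullet> sir_f \<gamma> (curve t) b = (b - bmin) * S_star * snd (curve t)"
  using costate_inner_sir_f[of "curve t" b] fst_curve_pos[of t] by (simp add: costate_def)

lemma costate_inner_curve_nonneg: "t \<le> 0 \<Longrightarrow> bmin \<le> b \<Longrightarrow> 0 \<le> costate t \<bullet> sir_f \<gamma> (curve t) b"
  using snd_curve_pos[of t] S_star_pos by (simp add: costate_inner_curve)

end

context sir_barrier
begin

lemma barrier_curve_exists: "\<exists>w. sir_barrier_curve \<gamma> bmin bmax Imax S_star w"
proof -
  let ?G = "\<lambda>u. snd (orbit (S_star, Imax) (- u))"
  have G_deriv: "(?G has_real_derivative - (bmin * (fst (orbit (S_star, Imax) (- u)) - S_star))) (at u)" for u
    using DERIV_chain2[OF snd_orbit_has_real_derivative DERIV_minus[OF DERIV_ident]] by simp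
  have G'_cont: "continuous_on UNIV (\<lambda>u. - (bmin * (fst (orbit (S_star, Imax) (- u)) - S_star)))"
    by (auto intro!: continuous_intros simp: orbit_def)
  \<comment> \<open>a time at which \<open>?G\<close> is certainly nonpositive, from \<open>exp x \<ge> 1 + x + x\<^sup>2 / 2\<close>\<close>
  define x where "x = 2 * Imax / S_star + 1"
  have "1 \<le> x" using Imax_pos S_star_pos by (simp add: x_def)
  then have "x \<le> x\<^sup>2" by (simp add: power2_eq_square)
  have "S_star * (1 + x + x\<^sup>2 / 2) \<le> S_star * exp x"
    using exp_lower_Taylor_quadratic[of x] \<open>1 \<le> x\<close> S_star_pos by simp
  then have "S_star + S_star * x + S_star * x\<^sup>2 / 2 \<le> S_star * exp x" by (simp add: algebra_simps)
  moreover have "S_star * x \<le> S_star * x\<^sup>2" using \<open>x \<le> x\<^sup>2\<close> S_star_pos by simp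
  moreover have "?G (x / bmin) = Imax + S_star + S_star * x - S_star * exp x"
    unfolding orbit_def using bmin_pos by (simp add: gamma_eq algebra_simps)
  moreover have "S_star * x = 2 * Imax + S_star" using S_star_pos by (simp add: x_def field_simps)
  ultimately have "?G (x / bmin) \<le> 0" using S_star_pos by linarith
  moreover have "0 < ?G 0" using Imax_pos by simp
  moreover have "0 < x / bmin" using \<open>1 \<le> x\<close> bmin_pos by simp
  ultimately obtain w where w: "w 0 = 0"
    "\<forall>t\<ge>0. 0 \<le> w t \<and> 0 < ?G (w t) \<and> (w has_real_derivative ?G (w t)) (at t)"
    "\<forall>t>0. 0 < w t" "\<forall>v\<ge>0. (\<forall>u\<in>{0..v}. 0 < ?G u) \<longrightarrow> (\<exists>t\<ge>0. w t = v)"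
    using autonomous_ode_solution[OF G_deriv G'_cont \<open>0 < ?G 0\<close> \<open>0 < x / bmin\<close>] by auto
  have "sir_barrier_curve \<gamma> bmin bmax Imax S_star w"
    by (intro sir_barrier_curve.intro sir_barrier_axioms sir_barrier_curve_axioms.intro) (use w in auto)
  then show ?thesis by blast
qed

end

theorem proposition2:
  fixes \<gamma> bmin bmax Imax t0 :: real
  assumes "\<gamma> > 0" "0 < bmin" "bmin \<le> bmax" "0 < Imax" "Imax \<le> 1"
    and "\<gamma> / bmin + Imax \<le> 1"
  shows "\<exists>J tbar (\<beta>b :: real \<Rightarrow> real) (x :: real \<Rightarrow> real \<times> real) (lam :: real \<Rightarrow> real \<times> real).
     \<comment> \<open>the curve is defined on an interval J ending at tbar\<close>
     is_interval J \<and> tbar \<in> J \<and> (\<forall>t\<in>J. t \<le> tbar) \<and> J \<noteq> {tbar} \<and>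
     \<comment> \<open>admissible input, generated by the input rule\<close>
     \<beta>b \<in> borel_measurable lebesgue \<and> (\<forall>t. bmin \<le> \<beta>b t \<and> \<beta>b t \<le> bmax) \<and>
     (\<forall>t\<in>J. (snd (lam t) - fst (lam t) < 0 \<longrightarrow> \<beta>b t = bmax) \<and>
             (snd (lam t) - fst (lam t) > 0 \<longrightarrow> \<beta>b t = bmin)) \<and>
     \<comment> \<open>integral curve of the SIR dynamics on J\<close>
     (\<forall>s\<in>J. \<forall>t\<in>J. s \<le> t \<longrightarrow>
        ((\<lambda>\<tau>. sir_f \<gamma> (x \<tau>) (\<beta>b \<tau>)) has_integral (x t - x s)) {s..t}) \<and>
     \<comment> \<open>adjoint equation  \<lambda>' = [[\<beta> I, -\<beta> I],[\<beta> S, -\<beta> S + \<gamma>]] \<lambda>,  \<lambda>(tbar) = (0,1)\<close>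
     (\<forall>s\<in>J. \<forall>t\<in>J. s \<le> t \<longrightarrow>
        ((\<lambda>\<tau>. (\<beta>b \<tau> * snd (x \<tau>) * fst (lam \<tau>) - \<beta>b \<tau> * snd (x \<tau>) * snd (lam \<tau>),
                \<beta>b \<tau> * fst (x \<tau>) * fst (lam \<tau>) + (- \<beta>b \<tau> * fst (x \<tau>) + \<gamma>) * snd (lam \<tau>)))
          has_integral (lam t - lam s)) {s..t}) \<and>
     lam tbar = (0, 1) \<and>
     \<comment> \<open>Hamiltonian minimum condition (a.e.)\<close>
     (AE t in lebesgue. t \<in> J \<longrightarrow>
        lam t \<bullet> sir_f \<gamma> (x t) (\<beta>b t) = 0 \<and>
        (\<forall>b. bmin \<le> b \<and> b \<le> bmax \<longrightarrow> lam t \<bullet> sir_f \<gamma> (x t) (\<beta>b t) \<le> lam t \<bullet> sir_f \<gamma> (x t) b)) \<and>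
     \<comment> \<open>ends tangentially to G_0 \<inter> \<Pi> at z = (\<gamma>/bmin, Imax)\<close>
     x tbar = (\<gamma> / bmin, Imax) \<and> x tbar \<in> G_zero Imax \<inter> Pi_set \<and>
     Lfg \<gamma> (x tbar) (\<beta>b tbar) = 0 \<and>
     (\<forall>b. bmin \<le> b \<and> b \<le> bmax \<longrightarrow> Lfg \<gamma> (x tbar) (\<beta>b tbar) \<le> Lfg \<gamma> (x tbar) b) \<and>
     \<comment> \<open>the curve lies in G_- just before tbar\<close>
     (\<exists>\<epsilon>>0. {tbar - \<epsilon><..<tbar} \<subseteq> J \<and> (\<forall>t\<in>{tbar - \<epsilon><..<tbar}. x t \<in> G_minus Imax)) \<and>
     \<comment> \<open>the barrier (within \<Pi>, I > 0) is constituted by this curve\<close>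
     barrier \<gamma> bmin bmax Imax t0 \<inter> {p \<in> Pi_set. snd p > 0}
       = x ` {t \<in> J. t < tbar} \<inter> {p \<in> Pi_set. snd p > 0}"
proof -
  interpret sir_barrier \<gamma> bmin bmax Imax "\<gamma> / bmin"
    using assms by unfold_locales auto
  obtain w where "sir_barrier_curve \<gamma> bmin bmax Imax (\<gamma> / bmin) w"
    using barrier_curve_exists by blast
  then interpret sir_barrier_curve \<gamma> bmin bmax Imax "\<gamma> / bmin" w .
  show ?thesis
  proof (rule exI[of _ "{..0}"], rule exI[of _ 0], rule exI[of _ "\<lambda>_. bmin"], rule exI[of _ curve],
      rule exI[of _ costate], intro conjI)
    show "curve 0 \<in> G_zero Imax \<inter> Pi_set"
      using assms(4-6) S_star_pos by (simp add: curve_0 G_zero_def Pi_set_def)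
    show "AE t in lebesgue. t \<in> {..0} \<longrightarrow> costate t \<bullet> sir_f \<gamma> (curve t) bmin = 0 \<and>
        (\<forall>b. bmin \<le> b \<and> b \<le> bmax \<longrightarrow> costate t \<bullet> sir_f \<gamma> (curve t) bmin \<le> costate t \<bullet> sir_f \<gamma> (curve t) b)"
      using costate_inner_curve_nonneg by (intro AE_I2) (simp add: costate_inner_curve[of _ bmin])
    show "\<exists>\<epsilon>>0. {0 - \<epsilon><..<0} \<subseteq> {..0} \<and> (\<forall>t\<in>{0 - \<epsilon><..<0}. curve t \<in> G_minus Imax)"
      using curve_on_level_set by (intro exI[of _ 1]) (auto simp: G_minus_def)
    show "{..0::real} \<noteq> {0}" by (metis atMost_iff neg_le_0_iff_le singletonD zero_le_one zero_neq_neg_one)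
    show "\<forall>t\<in>{..0}. (snd (costate t) - fst (costate t) < 0 \<longrightarrow> bmin = bmax) \<and>
        (snd (costate t) - fst (costate t) > 0 \<longrightarrow> bmin = bmin)"
      using fst_costate_less_snd by (auto dest: less_asym)
  qed (use bmin_le_bmax curve_has_integral costate_has_integral costate_0 curve_0 Lfg_curve_0
        Lfg_curve_0_le barrier_eq_curve in \<open>auto simp: is_interval_def\<close>)
qed

end
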